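(* Let $\mathcal{D}$ be a clocked basic action theory and $K\in\mathbb{N}$ at least as large as every natural-number constant mentioned in $\mathcal{D}$. Then the time-abstract transition system $\mathcal{T}_{\mathcal{D}}$ has finitely many states.
   Context: Situation calculus setting: sorts action, situation, object and time (the real numbers); $S_0$ initial situation; $\mathit{do}(a,s)$ the successor situation; $\mathcal{S}$ is the set of ground situations. Fluents are relation or function symbols with last argument a situation and other arguments objects; finitely many fluents, finitely many action types, finite set $\mathcal{O}$ of object constants (unique names, domain closure). A formula is uniform in $s$ if it mentions no situation term other than $s$ and does not mention $\mathit{Poss}$. A BAT is $\mathcal{D} = \mathcal{D}_0 \cup \mathcal{D}_{poss} \cup \mathcal{D}_{ssa} \cup \mathcal{D}_{ca} \cup \mathcal{D}_{co} \cup \Sigma$ (initial description uniform in $S_0$ with complete information, precondition axioms, successor state axioms, domain closure and unique name axioms for actions and objects, foundational axioms including the ordering $\sqsubset$). $\mathit{Exec}(s)$ abbreviates $\forall a,s'(\mathit{do}(a,s')\sqsubseteq s\supset\mathit{Poss}(a,s'))$. Clock comparison: $f(\vec x,s)\bowtie v$ or $v\bowtie v'$ ($f$ functional fluent, $v,v'\in\mathbb{N}$, $\bowtie\in\{<,\leq,=,\geq,>\}$). Clocked formula: every atomic subformula mentioning a time term is a clock comparison; time-independent: no time term. A BAT is clocked if there is a distinguished action type $\mathit{wait}(t)$ (others have no time argument) and: functional fluents take time values and are $0$ at $S_0$; each functional fluent has successor state axiom $f(\vec o,\mathit{do}(a,s))=y \equiv \exists t\,(a=\mathit{wait}(t)\wedge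 y=f(\vec o,s)+t) \vee (\neg\exists t\, a=\mathit{wait}(t)) \wedge (\phi_f(\vec o,a,s)\wedge y=0 \vee \neg\phi_f(\vec o,a,s)\wedge y=f(\vec o,s))$ with $\phi_f$ time-independent, uniform in $s$; relational successor state axioms and precondition axioms have clocked right-hand sides uniform in $s$; $\mathit{Poss}(\mathit{wait}(t),s)\equiv\top$. Functional fluents are clocks; $\mathcal{C}$ the ground situation-suppressed clock terms; $\nu_\sigma(\omega)=\tau$ iff $\mathcal{D}\models\omega[\sigma]=\tau$. For $u,v\geq0$: $u\sim_K v$ iff both $>K$, or both $\leq K$ with equal floors and equal ceilings; $\mathrm{fract}(v)=v-\lfloor v\rfloor$ if $v\leq K$, else $0$. $\sigma_1\approx_{\mathcal{D}K}\sigma_2$ iff (1) they entail the same ground relational fluent atoms, and (2) $\nu_{\sigma_1}(\omega)\sim_K\nu_{\sigma_2}(\omega)$ for all $\omega\in\mathcal{C}$ and $\mathrm{fract}(\nu_{\sigma_1}(\omega))\leq\mathrm{fract}(\nu_{\sigma_1}(\omega'))$ iff $\mathrm{fract}(\nu_{\sigma_2}(\omega))\leq\mathrm{fract}(\nu_{\sigma_2}(\omega'))$ for all $\omega,\omega'\in\mathcal{C}$. $[\sigma]_{\approx_{\mathcal{D}K}}$ is the equivalence class of $\sigma$. The time-abstract transition system $\mathcal{T}_{\mathcal{D}}=(Q,q_0,\rightarrow)$ has states $Q\subseteq\mathcal{S}/\approx_{\mathcal{D}K}$, initial state $q_0=[S_0]_{\approx_{\mathcal{D}K}}$, and transitions $[\sigma]_{\approx_{\mathcal{D}K}}\rightarrow[\sigma']_{\approx_{\mathcal{D}K}}$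 whenever $\sigma'=\mathit{do}(\alpha,\sigma)$ for some ground action $\alpha$ and $\mathcal{D}\models\mathit{Exec}(\sigma')$. *)

theory Defs
  imports Complex_Main
begin

datatype cmp = Lt | Le | Eq | Ge | Gt

fun cmp_eval :: "cmp \<Rightarrow> real \<Rightarrow> real \<Rightarrow> bool" where
  "cmp_eval Lt x y = (x < y)"
| "cmp_eval Le x y = (x \<le> y)"
| "cmp_eval Eq x y = (x = y)"
| "cmp_eval Ge x y = (x \<ge> y)"
| "cmp_eval Gt x y = (x > y)"

text \<open>Ground (situation-suppressed) clocked formulas: 'f are ground relational
  fluent atoms, 'c ground clock terms. Object quantifiers and equalities between
  object / action terms are eliminated by domain closure and unique names.\<close>
datatype ('f, 'c) cform =
    CTrue
  | Atom 'f
  | ClockCmp 'c cmp nat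
  | ConstCmp nat cmp nat
  | CNot "('f, 'c) cform"
  | CAnd "('f, 'c) cform" "('f, 'c) cform"

fun eval :: "('f, 'c) cform \<Rightarrow> 'f set \<Rightarrow> ('c \<Rightarrow> real) \<Rightarrow> bool" where
  "eval CTrue R v = True"
| "eval (Atom F) R v = (F \<in> R)"
| "eval (ClockCmp c op n) R v = cmp_eval op (v c) (real n)"
| "eval (ConstCmp m op n) R v = cmp_eval op (real m) (real n)"
| "eval (CNot p) R v = (\<not> eval p R v)"
| "eval (CAnd p q) R v = (eval p R v \<and> eval q R v)"

fun atoms_of :: "('f, 'c) cform \<Rightarrow> 'f set" where
  "atoms_of CTrue = {}"
| "atoms_of (Atom F) = {F}"
| "atoms_of (ClockCmp c op n) = {}"
| "atoms_of (ConstCmp m op n) = {}"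
| "atoms_of (CNot p) = atoms_of p"
| "atoms_of (CAnd p q) = atoms_of p \<union> atoms_of q"

fun clocks_of :: "('f, 'c) cform \<Rightarrow> 'c set" where
  "clocks_of CTrue = {}"
| "clocks_of (Atom F) = {}"
| "clocks_of (ClockCmp c op n) = {c}"
| "clocks_of (ConstCmp m op n) = {}"
| "clocks_of (CNot p) = clocks_of p"
| "clocks_of (CAnd p q) = clocks_of p \<union> clocks_of q"

fun consts_of :: "('f, 'c) cform \<Rightarrow> nat set" where
  "consts_of CTrue = {}"
| "consts_of (Atom F) = {}"
| "consts_of (ClockCmp c op n) = {n}"
| "consts_of (ConstCmp m op n) = {m, n}"
| "consts_of (CNot p) = consts_of p"
| "consts_of (CAnd p q) = consts_of p \<union> consts_of q"

fun time_indep :: "('f, 'c) cform \<Rightarrow> bool" where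
  "time_indep CTrue = True"
| "time_indep (Atom F) = True"
| "time_indep (ClockCmp c op n) = False"
| "time_indep (ConstCmp m op n) = False"
| "time_indep (CNot p) = time_indep p"
| "time_indep (CAnd p q) = (time_indep p \<and> time_indep q)"

datatype 'a action = Wait real | Act 'a

datatype 'a sit = S0 | Do "'a action" "'a sit"

text \<open>A clocked BAT, given by its grounded content.
  \<^item> rel_atoms: the ground relational fluent atoms;
  \<^item> clocks: the ground clock terms \<open>\<C>\<close>;
  \<^item> gacts: the ground non-wait actions;
  \<^item> init: the relational atoms true at S0 (complete information; clocks are 0 at S0);
  \<^item> ssa_wait F / ssa_act F \<alpha>: the ground instance of the right-hand side of the
    successor state axiom of atom F for a = wait(t) / a = \<alpha> (a clocked formula);
  \<^item> reset c \<alpha>: the ground instance \<open>\<phi>_f(o,\<alpha>,s)\<close> of the clock reset condition;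
  \<^item> poss \<alpha>: the ground instance of the precondition axiom of \<alpha>.\<close>
record ('f, 'c, 'a) cbat =
  rel_atoms :: "'f set"
  clocks :: "'c set"
  gacts :: "'a set"
  init :: "'f set"
  ssa_wait :: "'f \<Rightarrow> ('f, 'c) cform"
  ssa_act :: "'f \<Rightarrow> 'a \<Rightarrow> ('f, 'c) cform"
  reset :: "'c \<Rightarrow> 'a \<Rightarrow> ('f, 'c) cform"
  poss :: "'a \<Rightarrow> ('f, 'c) cform"

definition wf_form :: "('f, 'c, 'a) cbat \<Rightarrow> ('f, 'c) cform \<Rightarrow> bool" where
  "wf_form D p \<longleftrightarrow> atoms_of p \<subseteq> rel_atoms D \<and> clocks_of p \<subseteq> clocks D"

definition clocked_bat :: "('f, 'c, 'a) cbat \<Rightarrow> bool" where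
  "clocked_bat D \<longleftrightarrow>
     finite (rel_atoms D) \<and> finite (clocks D) \<and> finite (gacts D) \<and>
     init D \<subseteq> rel_atoms D \<and>
     (\<forall>F\<in>rel_atoms D. wf_form D (ssa_wait D F)) \<and>
     (\<forall>F\<in>rel_atoms D. \<forall>\<alpha>\<in>gacts D. wf_form D (ssa_act D F \<alpha>)) \<and>
     (\<forall>\<alpha>\<in>gacts D. wf_form D (poss D \<alpha>)) \<and>
     (\<forall>c\<in>clocks D. \<forall>\<alpha>\<in>gacts D. wf_form D (reset D c \<alpha>) \<and> time_indep (reset D c \<alpha>))"

definition consts_bat :: "('f, 'c, 'a) cbat \<Rightarrow> nat set" where
  "consts_bat D =
     (\<Union>F\<in>rel_atoms D. consts_of (ssa_wait D F)) \<union>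
     (\<Union>F\<in>rel_atoms D. \<Union>\<alpha>\<in>gacts D. consts_of (ssa_act D F \<alpha>)) \<union>
     (\<Union>\<alpha>\<in>gacts D. consts_of (poss D \<alpha>)) \<union>
     (\<Union>c\<in>clocks D. \<Union>\<alpha>\<in>gacts D. consts_of (reset D c \<alpha>))"

text \<open>The (unique) model of D: relational atoms true and clock values at a situation.\<close>
fun state :: "('f, 'c, 'a) cbat \<Rightarrow> 'a sit \<Rightarrow> 'f set \<times> ('c \<Rightarrow> real)" where
  "state D S0 = (init D, (\<lambda>c. 0))"
| "state D (Do (Wait t) s) =
     (let (R, v) = state D s in
       ({F \<in> rel_atoms D. eval (ssa_wait D F) R v}, (\<lambda>c. v c + t)))"
| "state D (Do (Act \<alpha>) s) =
     (let (R, v) = state D s in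
       ({F \<in> rel_atoms D. eval (ssa_act D F \<alpha>) R v},
        (\<lambda>c. if eval (reset D c \<alpha>) R v then 0 else v c)))"

definition holds :: "('f, 'c, 'a) cbat \<Rightarrow> 'a sit \<Rightarrow> 'f set" where
  "holds D s = fst (state D s)"

definition nu :: "('f, 'c, 'a) cbat \<Rightarrow> 'a sit \<Rightarrow> 'c \<Rightarrow> real" where
  "nu D s = snd (state D s)"

fun ground_act :: "('f, 'c, 'a) cbat \<Rightarrow> 'a action \<Rightarrow> bool" where
  "ground_act D (Wait t) = (t \<ge> 0)"
| "ground_act D (Act \<alpha>) = (\<alpha> \<in> gacts D)"

fun ground_sit :: "('f, 'c, 'a) cbat \<Rightarrow> 'a sit \<Rightarrow> bool" where
  "ground_sit D S0 = True"
| "ground_sit D (Do a s) = (ground_act D a \<and> ground_sit D s)"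

fun Poss :: "('f, 'c, 'a) cbat \<Rightarrow> 'a action \<Rightarrow> 'a sit \<Rightarrow> bool" where
  "Poss D (Wait t) s = True"
| "Poss D (Act \<alpha>) s = eval (poss D \<alpha>) (holds D s) (nu D s)"

fun Exec :: "('f, 'c, 'a) cbat \<Rightarrow> 'a sit \<Rightarrow> bool" where
  "Exec D S0 = True"
| "Exec D (Do a s) = (Exec D s \<and> Poss D a s)"

definition simK :: "nat \<Rightarrow> real \<Rightarrow> real \<Rightarrow> bool" where
  "simK K u v \<longleftrightarrow> (u > real K \<and> v > real K) \<or>
     (u \<le> real K \<and> v \<le> real K \<and> \<lfloor>u\<rfloor> = \<lfloor>v\<rfloor> \<and> \<lceil>u\<rceil> = \<lceil>v\<rceil>)"

definition fractK :: "nat \<Rightarrow> real \<Rightarrow> real" where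
  "fractK K v = (if v \<le> real K then v - of_int \<lfloor>v\<rfloor> else 0)"

definition reg_equiv :: "('f, 'c, 'a) cbat \<Rightarrow> nat \<Rightarrow> 'a sit \<Rightarrow> 'a sit \<Rightarrow> bool" where
  "reg_equiv D K s1 s2 \<longleftrightarrow>
     holds D s1 = holds D s2 \<and>
     (\<forall>\<omega>\<in>clocks D. simK K (nu D s1 \<omega>) (nu D s2 \<omega>)) \<and>
     (\<forall>\<omega>\<in>clocks D. \<forall>\<omega>'\<in>clocks D.
        (fractK K (nu D s1 \<omega>) \<le> fractK K (nu D s1 \<omega>')) \<longleftrightarrow>
        (fractK K (nu D s2 \<omega>) \<le> fractK K (nu D s2 \<omega>')))"

definition cls :: "('f, 'c, 'a) cbat \<Rightarrow> nat \<Rightarrow> 'a sit \<Rightarrow> 'a sit set" where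
  "cls D K s = {s'. ground_sit D s' \<and> reg_equiv D K s s'}"

definition ts_init :: "('f, 'c, 'a) cbat \<Rightarrow> nat \<Rightarrow> 'a sit set" where
  "ts_init D K = cls D K S0"

definition ts_trans :: "('f, 'c, 'a) cbat \<Rightarrow> nat \<Rightarrow> 'a sit set \<Rightarrow> 'a sit set \<Rightarrow> bool" where
  "ts_trans D K q q' \<longleftrightarrow>
     (\<exists>\<sigma> \<alpha>. ground_sit D \<sigma> \<and> ground_act D \<alpha> \<and> q = cls D K \<sigma> \<and>
            q' = cls D K (Do \<alpha> \<sigma>) \<and> Exec D (Do \<alpha> \<sigma>))"

definition ts_states :: "('f, 'c, 'a) cbat \<Rightarrow> nat \<Rightarrow> 'a sit set set" where
  "ts_states D K = {q. (ts_trans D K)\<^sup>*\<^sup>* (ts_init D K) q}"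

end

theory Submission
  imports Defs
begin

text \<open>The region class of a situation is determined by its region signature: the
  true relational atoms, the floor and ceiling of each clock value not exceeding K, and
  the preorder of the clocks by fractional part. Clock values of ground situations are
  nonnegative, so these floors and ceilings lie in 0..K and the signatures of ground
  situations range over a finite set; hence there are only finitely many classes, and
  the states of the transition system are among them.\<close>

lemma holds_Do_Wait:
  "holds D (Do (Wait t) s) = {F \<in> rel_atoms D. eval (ssa_wait D F) (holds D s) (nu D s)}"
  by (simp add: holds_def nu_def split: prod.split)

lemma nu_Do_Wait: "nu D (Do (Wait t) s) = (\<lambda>c. nu D s c + t)"
  by (simp add: nu_def split: prod.split)

lemma holds_Do_Act:
  "holds D (Do (Act \<alpha>) s) = {F \<in> rel_atoms D. eval (ssa_act D F \<alpha>) (holds D s) (nu D s)}"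
  by (simp add: holds_def nu_def split: prod.split)

lemma nu_Do_Act:
  "nu D (Do (Act \<alpha>) s) =
    (\<lambda>c. if eval (reset D c \<alpha>) (holds D s) (nu D s) then 0 else nu D s c)"
  by (simp add: holds_def nu_def split: prod.split cong: if_cong)

lemma holds_subset_rel_atoms:
  assumes "init D \<subseteq> rel_atoms D"
  shows "holds D s \<subseteq> rel_atoms D"
proof (cases s)
  case S0
  then show ?thesis using assms by (simp add: holds_def)
next
  case (Do a s')
  then show ?thesis by (cases a) (auto simp: holds_Do_Wait holds_Do_Act)
qed

lemma nu_nonneg: "ground_sit D s \<Longrightarrow> 0 \<le> nu D s c"
proof (induction s)
  case S0
  then show ?case by (simp add: nu_def)
next
  case (Do a s)
  then show ?case by (cases a) (auto simp: nu_Do_Wait nu_Do_Act)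
qed

definition region_key :: "nat \<Rightarrow> real \<Rightarrow> (int \<times> int) option" where
  "region_key K u = (if u > real K then None else Some (\<lfloor>u\<rfloor>, \<lceil>u\<rceil>))"

lemma simK_iff_region_key: "simK K u v \<longleftrightarrow> region_key K u = region_key K v"
  unfolding simK_def region_key_def by auto

definition region_keys :: "nat \<Rightarrow> (int \<times> int) option set" where
  "region_keys K = insert None (Some ` ({0..int K} \<times> {0..int K}))"

lemma finite_region_keys: "finite (region_keys K)"
  by (simp add: region_keys_def)

lemma region_key_in_region_keys:
  assumes "0 \<le> u"
  shows "region_key K u \<in> region_keys K"
  using assms
  by (auto simp: region_key_def region_keys_def ceiling_le_iff le_floor_iff floor_le_iff)

definition region_sig ::
    "('f, 'c, 'a) cbat \<Rightarrow> nat \<Rightarrow> 'a sit \<Rightarrow> 'f set \<times> ('c \<times> (int \<times> int) option) set \<times> ('c \<times> 'c) set"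
  where
  "region_sig D K s = (holds D s,
     {(\<omega>, region_key K (nu D s \<omega>)) | \<omega>. \<omega> \<in> clocks D},
     {(\<omega>, \<omega>'). \<omega> \<in> clocks D \<and> \<omega>' \<in> clocks D \<and> fractK K (nu D s \<omega>) \<le> fractK K (nu D s \<omega>')})"

lemma graph_on_eq_iff:
  "{(x, f x) | x. x \<in> A} = {(x, g x) | x. x \<in> A} \<longleftrightarrow> (\<forall>x\<in>A. f x = g x)"
  by (auto simp: set_eq_iff)

lemma rel_on_eq_iff:
  "{(x, y). x \<in> A \<and> y \<in> A \<and> P x y} = {(x, y). x \<in> A \<and> y \<in> A \<and> Q x y}
    \<longleftrightarrow> (\<forall>x\<in>A. \<forall>y\<in>A. P x y = Q x y)"
  by (auto simp: set_eq_iff)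

lemma reg_equiv_iff_region_sig_eq:
  "reg_equiv D K s1 s2 \<longleftrightarrow> region_sig D K s1 = region_sig D K s2"
  unfolding reg_equiv_def region_sig_def simK_iff_region_key prod.inject
    graph_on_eq_iff rel_on_eq_iff ..

lemma cls_eq_region_sig:
  "cls D K s = {s'. ground_sit D s' \<and> region_sig D K s' = region_sig D K s}"
  unfolding cls_def reg_equiv_iff_region_sig_eq by auto

lemma ts_states_subset_cls:
  "ts_states D K \<subseteq> cls D K ` {s. ground_sit D s}"
proof
  fix q assume "q \<in> ts_states D K"
  then have "(ts_trans D K)\<^sup>*\<^sup>* (ts_init D K) q" by (simp add: ts_states_def)
  then show "q \<in> cls D K ` {s. ground_sit D s}"
  proof (induction rule: rtranclp_induct)
    case base
    show ?case by (force simp: ts_init_def)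
  next
    case (step q q')
    then show ?case unfolding ts_trans_def by force
  qed
qed

lemma finite_region_sig_ground:
  assumes "finite (rel_atoms D)" "finite (clocks D)" "init D \<subseteq> rel_atoms D"
  shows "finite (region_sig D K ` {s. ground_sit D s})"
proof (rule finite_subset)
  show "region_sig D K ` {s. ground_sit D s}
    \<subseteq> Pow (rel_atoms D) \<times> Pow (clocks D \<times> region_keys K) \<times> Pow (clocks D \<times> clocks D)"
    using holds_subset_rel_atoms[OF assms(3)] region_key_in_region_keys[OF nu_nonneg]
    by (auto simp: region_sig_def)
  show "finite (Pow (rel_atoms D) \<times> Pow (clocks D \<times> region_keys K) \<times> Pow (clocks D \<times> clocks D))"
    using assms(1,2) finite_region_keys by simp
qed

lemma finite_cls_ground:
  assumes "finite (rel_atoms D)" "finite (clocks D)" "init D \<subseteq> rel_atoms D"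
  shows "finite (cls D K ` {s. ground_sit D s})"
proof -
  let ?class = "\<lambda>r. {s'. ground_sit D s' \<and> region_sig D K s' = r}"
  have "cls D K = ?class \<circ> region_sig D K"
    by (rule ext) (simp add: cls_eq_region_sig)
  then have "cls D K ` {s. ground_sit D s} = ?class ` region_sig D K ` {s. ground_sit D s}"
    by (simp only: image_comp)
  then show ?thesis
    using finite_region_sig_ground[OF assms] by simp
qed

theorem lemma4:
  fixes D :: "('f, 'c, 'a) cbat" and K :: nat
  assumes "clocked_bat D"
    and "\<forall>n\<in>consts_bat D. n \<le> K"
  shows "finite (ts_states D K)"
proof -
  from assms(1) have "finite (rel_atoms D)" "finite (clocks D)" "init D \<subseteq> rel_atoms D"
    by (auto simp: clocked_bat_def)
  then have "finite (cls D K ` {s. ground_sit D s})"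
    by (rule finite_cls_ground)
  then show ?thesis
    by (rule finite_subset[OF ts_states_subset_cls])
qed

end
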